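(* Any set of $5$ points in $\mathbb{R}^2$ that is in convex position is in c.s.c. position.
   Context: A set $S\subset\mathbb{R}^2$ is in convex position if every point of $S$ lies on the boundary of $\mathrm{conv}(S)$. A set of points in $\mathbb{R}^2$ is in c.s.c. position (centrally symmetric convex position) if it is contained in the boundary of a centrally symmetric convex body. *)

theory Defs
  imports "HOL-Analysis.Analysis"
begin

definition convex_position :: "(real^2) set \<Rightarrow> bool" where
  "convex_position S \<longleftrightarrow> S \<subseteq> frontier (convex hull S)"

definition convex_body :: "(real^2) set \<Rightarrow> bool" where
  "convex_body K \<longleftrightarrow> compact K \<and> convex K \<and> interior K \<noteq> {}"

definition centrally_symmetric :: "(real^2) set \<Rightarrow> bool" where
  "centrally_symmetric K \<longleftrightarrow> (\<exists>c. \<forall>x\<in>K. 2 *\<^sub>R c - x \<in> K)"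

definition csc_position :: "(real^2) set \<Rightarrow> bool" where
  "csc_position S \<longleftrightarrow> (\<exists>K. convex_body K \<and> centrally_symmetric K \<and> S \<subseteq> frontier K)"

end

theory Submission
  imports Defs
begin

text \<open>A collinear set lies on one side of a parallelogram, and parallelograms are centrally
  symmetric convex bodies. Otherwise take a triangle a b c of maximal area among the five points and
  apply the affine bijection mapping 0, (1,0), (0,1) to a, b, c; c.s.c. position is invariant under it.
  Maximality confines the two remaining points p and q to |x1|, |x2|, |1 - x1 - x2| \<le> 1, and
  convex position puts each of them beyond some edge of the triangle. After relabelling the vertices,
  p and q lie beyond the same edge or beyond two adjacent edges, and in both cases an explicit
  parallelogram has all five points on its boundary.\<close>

section \<open>Determinants in the plane\<close>

definition det2 :: "real^2 \<Rightarrow> real^2 \<Rightarrow> real" where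
  "det2 x y = x$1 * y$2 - x$2 * y$1"

lemma inner_real2: "(u::real^2) \<bullet> x = u$1 * x$1 + u$2 * x$2"
  by (simp add: inner_vec_def sum_2)

lemma det2_mult_nth:
  "det2 u v * x$1 = (u \<bullet> x) * v$2 - (v \<bullet> x) * u$2"
  "det2 u v * x$2 = (v \<bullet> x) * u$1 - (u \<bullet> x) * v$1"
  by (simp_all add: det2_def inner_real2 algebra_simps)

lemma eq_0_if_orthogonal_to_independent:
  assumes "det2 u v \<noteq> 0" "w \<bullet> u = 0" "w \<bullet> v = 0"
  shows "w = 0"
  using assms det2_mult_nth[of u v w] by (simp add: vec_eq_iff forall_2 inner_commute)

lemma ex_inner_eq_pair:
  assumes "det2 u v \<noteq> 0"
  shows "\<exists>z. u \<bullet> z = r \<and> v \<bullet> z = r'"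
proof
  let ?z = "vector [(r * v$2 - r' * u$2) / det2 u v, (r' * u$1 - r * v$1) / det2 u v] :: real^2"
  show "u \<bullet> ?z = r \<and> v \<bullet> ?z = r'"
  proof
    have "u \<bullet> ?z = r * det2 u v / det2 u v" "v \<bullet> ?z = r' * det2 u v / det2 u v"
      by (simp_all add: inner_real2 det2_def add_divide_distrib[symmetric] times_divide_eq_right[symmetric]
          algebra_simps)
    then show "u \<bullet> ?z = r" "v \<bullet> ?z = r'" using assms by simp_all
  qed
qed

lemma parallel_if_det2_eq_0:
  assumes "det2 v w = 0" "v \<noteq> 0"
  shows "w = ((w \<bullet> v) / (v \<bullet> v)) *\<^sub>R v"
proof -
  have "(v \<bullet> v) *\<^sub>R w = (w \<bullet> v) *\<^sub>R v"
    using assms(1) by (simp add: vec_eq_iff forall_2 inner_real2 det2_def algebra_simps)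
  moreover have "v \<bullet> v \<noteq> 0" using assms(2) by simp
  ultimately show ?thesis by (metis divide_inverse_commute scaleR_scaleR scaleR_one divide_self_if)
qed

lemma collinear_iff_det2:
  fixes S :: "(real^2) set"
  shows "collinear S \<longleftrightarrow> (\<forall>x\<in>S. \<forall>y\<in>S. \<forall>z\<in>S. det2 (y - x) (z - x) = 0)"
proof
  assume "collinear S"
  then obtain u where u: "\<forall>x\<in>S. \<forall>y\<in>S. \<exists>c. x - y = c *\<^sub>R u"
    by (auto simp: collinear_def)
  show "\<forall>x\<in>S. \<forall>y\<in>S. \<forall>z\<in>S. det2 (y - x) (z - x) = 0"
  proof (intro ballI)
    fix x y z assume "x \<in> S" "y \<in> S" "z \<in> S"
    then obtain c c' where "y - x = c *\<^sub>R u" "z - x = c' *\<^sub>R u"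
      using u by blast
    then show "det2 (y - x) (z - x) = 0" by (simp add: det2_def)
  qed
next
  assume det0: "\<forall>x\<in>S. \<forall>y\<in>S. \<forall>z\<in>S. det2 (y - x) (z - x) = 0"
  show "collinear S"
  proof (cases "\<exists>a\<in>S. \<exists>b\<in>S. a \<noteq> b")
    case True
    then obtain a b where "a \<in> S" "b \<in> S" "b - a \<noteq> 0" by auto
    then have "\<forall>x\<in>S. \<exists>t. x = a + t *\<^sub>R (b - a)"
      using parallel_if_det2_eq_0 det0 by (metis add.commute diff_add_cancel)
    then show ?thesis unfolding collinear_alt by blast
  next
    case False
    then have "S = {} \<or> (\<exists>a. S = {a})" by blast
    then show ?thesis by auto
  qed
qed

lemma det2_cyclic: "det2 (c - b) (a - b) = det2 (b - a) (c - a)"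
  by (simp add: det2_def algebra_simps)

lemma det2_barycentric:
  "det2 (b - a) (c - a) = det2 (b - x) (c - x) + det2 (c - x) (a - x) + det2 (a - x) (b - x)"
  "det2 (b - a) (c - a) *\<^sub>R x =
     det2 (b - x) (c - x) *\<^sub>R a + det2 (c - x) (a - x) *\<^sub>R b + det2 (a - x) (b - x) *\<^sub>R c"
  by (simp_all add: det2_def vec_eq_iff forall_2 algebra_simps)

section \<open>Parallelograms\<close>

definition parallelogram :: "real^2 \<Rightarrow> real^2 \<Rightarrow> real \<Rightarrow> real \<Rightarrow> real \<Rightarrow> real \<Rightarrow> (real^2) set" where
  "parallelogram u v l h l' h' = {x. l \<le> u \<bullet> x \<and> u \<bullet> x \<le> h \<and> l' \<le> v \<bullet> x \<and> v \<bullet> x \<le> h'}"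

lemma bounded_parallelogram:
  assumes "det2 u v \<noteq> 0"
  shows "bounded (parallelogram u v l h l' h')"
proof -
  define M where "M = \<bar>l\<bar> + \<bar>h\<bar> + \<bar>l'\<bar> + \<bar>h'\<bar>"
  define B where "B = (\<bar>u$1\<bar> + \<bar>u$2\<bar> + \<bar>v$1\<bar> + \<bar>v$2\<bar>) * M / \<bar>det2 u v\<bar>"
  have "norm x \<le> 2 * B" if "x \<in> parallelogram u v l h l' h'" for x
  proof -
    have ux: "\<bar>u \<bullet> x\<bar> \<le> M" and vx: "\<bar>v \<bullet> x\<bar> \<le> M"
      using that by (auto simp: parallelogram_def M_def)
    have "\<bar>det2 u v\<bar> * \<bar>x$i\<bar> \<le> (\<bar>u$1\<bar> + \<bar>u$2\<bar> + \<bar>v$1\<bar> + \<bar>v$2\<bar>) * M" for i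
    proof -
      have "\<bar>det2 u v\<bar> * \<bar>x$i\<bar> \<le> \<bar>u \<bullet> x\<bar> * (\<bar>v$1\<bar> + \<bar>v$2\<bar>) + \<bar>v \<bullet> x\<bar> * (\<bar>u$1\<bar> + \<bar>u$2\<bar>)"
        using det2_mult_nth[of u v x] exhaust_2[of i]
        by (auto simp: abs_mult[symmetric] abs_triangle_ineq4 distrib_left
            intro!: order.trans[OF abs_triangle_ineq4])
      also have "\<dots> \<le> M * (\<bar>v$1\<bar> + \<bar>v$2\<bar>) + M * (\<bar>u$1\<bar> + \<bar>u$2\<bar>)"
        using ux vx by (intro add_mono mult_right_mono) auto
      finally show ?thesis by (simp add: algebra_simps)
    qed
    then have comp: "\<bar>x$i\<bar> \<le> B" for i
      using assms by (simp add: B_def pos_le_divide_eq mult.commute)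
    show ?thesis
      using norm_le_l1_cart[of x] comp[of 1] comp[of 2] by (simp add: sum_2)
  qed
  then show ?thesis unfolding bounded_iff by blast
qed

lemma parallelogram_eq_Int_halfspaces:
  "parallelogram u v l h l' h' =
     {x. u \<bullet> x \<ge> l} \<inter> {x. u \<bullet> x \<le> h} \<inter> {x. v \<bullet> x \<ge> l'} \<inter> {x. v \<bullet> x \<le> h'}"
  by (auto simp: parallelogram_def)

lemma interior_parallelogram:
  assumes "u \<noteq> 0" "v \<noteq> 0"
  shows "interior (parallelogram u v l h l' h') = {x. l < u \<bullet> x \<and> u \<bullet> x < h \<and> l' < v \<bullet> x \<and> v \<bullet> x < h'}"
  using assms by (auto simp: parallelogram_eq_Int_halfspaces)

lemma centrally_symmetric_parallelogram:
  assumes "det2 u v \<noteq> 0"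
  shows "centrally_symmetric (parallelogram u v l h l' h')"
proof -
  obtain z where "u \<bullet> z = (l + h) / 2" "v \<bullet> z = (l' + h') / 2"
    using ex_inner_eq_pair[OF assms] by blast
  then have "u \<bullet> (2 *\<^sub>R z - x) = l + h - u \<bullet> x" "v \<bullet> (2 *\<^sub>R z - x) = l' + h' - v \<bullet> x" for x
    by (simp_all add: inner_diff_right)
  then show ?thesis
    unfolding centrally_symmetric_def parallelogram_def by (intro exI[of _ z]) auto
qed

lemma csc_position_parallelogram:
  assumes D: "det2 u v \<noteq> 0" and "l < h" "l' < h'"
    and sub: "S \<subseteq> parallelogram u v l h l' h'"
    and side: "\<And>x. x \<in> S \<Longrightarrow> u \<bullet> x = l \<or> u \<bullet> x = h \<or> v \<bullet> x = l' \<or> v \<bullet> x = h'"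
  shows "csc_position S"
proof -
  let ?P = "parallelogram u v l h l' h'"
  have "u \<noteq> 0" "v \<noteq> 0" using D by (auto simp: det2_def)
  note int = interior_parallelogram[OF this]
  have "closed ?P"
    by (simp add: parallelogram_eq_Int_halfspaces closed_Int closed_halfspace_le closed_halfspace_ge)
  then have "compact ?P" using bounded_parallelogram[OF D] by (simp add: compact_eq_bounded_closed)
  moreover have "convex ?P"
    by (simp add: parallelogram_eq_Int_halfspaces convex_Int convex_halfspace_le convex_halfspace_ge)
  moreover have "interior ?P \<noteq> {}"
  proof -
    obtain z where "u \<bullet> z = (l + h) / 2" "v \<bullet> z = (l' + h') / 2"
      using ex_inner_eq_pair[OF D] by blast
    then have "z \<in> interior ?P" using int \<open>l < h\<close> \<open>l' < h'\<close> by simp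
    then show ?thesis by blast
  qed
  moreover have "S \<subseteq> frontier ?P"
    using sub side \<open>closed ?P\<close> by (auto simp: frontier_def int)
  ultimately show ?thesis
    unfolding csc_position_def convex_body_def
    using centrally_symmetric_parallelogram[OF D] by blast
qed

lemma csc_position_collinear:
  fixes S :: "(real^2) set"
  assumes "finite S" "collinear S"
  shows "csc_position S"
proof -
  obtain a v0 where line0: "\<forall>x\<in>S. \<exists>t. x = a + t *\<^sub>R v0"
    using assms(2) collinear_alt by blast
  define v :: "real^2" where "v = (if v0 = 0 then vector [1, 0] else v0)"
  have line: "\<exists>t. x = a + t *\<^sub>R v" if "x \<in> S" for x
    using line0 that by (cases "v0 = 0") (auto simp: v_def)
  have "v \<noteq> 0" unfolding v_def by (metis vector_2(1) zero_index zero_neq_one)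
  define n :: "real^2" where "n = vector [v$2, - v$1]"
  have "det2 n v = v \<bullet> v" by (simp add: n_def det2_def inner_real2)
  then have D: "det2 n v \<noteq> 0" using \<open>v \<noteq> 0\<close> by simp
  have "n \<bullet> v = 0" by (simp add: n_def inner_real2)
  then have n_const: "n \<bullet> x = n \<bullet> a" if "x \<in> S" for x
    using line[OF that] by (auto simp: inner_add_right)
  define R where "R = (\<Sum>x\<in>S. \<bar>v \<bullet> x\<bar>)"
  have R: "\<bar>v \<bullet> x\<bar> \<le> R" if "x \<in> S" for x
    unfolding R_def by (rule member_le_sum[OF that _ assms(1)]) simp
  show ?thesis
  proof (rule csc_position_parallelogram[OF D, of "n \<bullet> a" "n \<bullet> a + 1" "- R" "R + 1"])
    have "0 \<le> R" unfolding R_def by (simp add: sum_nonneg)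
    then show "- R < R + 1" by simp
    show "S \<subseteq> parallelogram n v (n \<bullet> a) (n \<bullet> a + 1) (- R) (R + 1)"
      using n_const R by (fastforce simp: parallelogram_def abs_le_iff)
  qed (use n_const in auto)
qed

section \<open>Affine invariance\<close>

lemma frontier_injective_linear_image:
  fixes f :: "'a::euclidean_space \<Rightarrow> 'a"
  assumes "linear f" "inj f"
  shows "frontier (f ` S) = f ` frontier S"
  using assms by (simp add: frontier_def closure_injective_linear_image[symmetric]
      interior_injective_linear_image image_set_diff)

lemma csc_position_linear_image:
  fixes f :: "real^2 \<Rightarrow> real^2"
  assumes f: "linear f" "inj f" and "csc_position S"
  shows "csc_position (f ` S)"
proof -
  obtain K c where K: "compact K" "convex K" "interior K \<noteq> {}" "S \<subseteq> frontier K"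
    and sym: "\<forall>x\<in>K. 2 *\<^sub>R c - x \<in> K"
    using \<open>csc_position S\<close>
    by (auto simp: csc_position_def convex_body_def centrally_symmetric_def)
  have "compact (f ` K)"
    using K(1) f(1) by (intro compact_continuous_image linear_continuous_on) (simp add: linear_conv_bounded_linear)
  moreover have "convex (f ` K)" using K(2) f(1) by (rule convex_linear_image[rotated])
  moreover have "interior (f ` K) \<noteq> {}" using K(3) f by (simp add: interior_injective_linear_image)
  moreover have "f ` S \<subseteq> frontier (f ` K)" using K(4) f by (auto simp: frontier_injective_linear_image)
  moreover have "\<forall>y\<in>f ` K. 2 *\<^sub>R f c - y \<in> f ` K"
  proof
    fix y assume "y \<in> f ` K"
    then obtain x where "x \<in> K" "y = f x" by blast
    then have "2 *\<^sub>R f c - y = f (2 *\<^sub>R c - x)" using f(1) by (simp add: linear_diff linear_scale)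
    then show "2 *\<^sub>R f c - y \<in> f ` K" using sym \<open>x \<in> K\<close> by blast
  qed
  ultimately show ?thesis
    unfolding csc_position_def convex_body_def centrally_symmetric_def by blast
qed

lemma csc_position_translation:
  assumes "csc_position S"
  shows "csc_position ((+) a ` S)"
proof -
  obtain K c where K: "compact K" "convex K" "interior K \<noteq> {}" "S \<subseteq> frontier K"
    and sym: "\<forall>x\<in>K. 2 *\<^sub>R c - x \<in> K"
    using assms by (auto simp: csc_position_def convex_body_def centrally_symmetric_def)
  have "2 *\<^sub>R (a + c) - (a + x) = a + (2 *\<^sub>R c - x)" for x :: "real^2"
    by (simp add: algebra_simps scaleR_2)
  then have "\<forall>y\<in>(+) a ` K. 2 *\<^sub>R (a + c) - y \<in> (+) a ` K"
    using sym by auto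
  moreover have "(+) a ` S \<subseteq> frontier ((+) a ` K)"
    using K(4) by (auto simp: frontier_translation)
  ultimately show ?thesis
    using K(1-3) unfolding csc_position_def convex_body_def centrally_symmetric_def
    by (metis compact_translation convex_translation interior_translation image_is_empty)
qed

definition frame_linear :: "real^2 \<Rightarrow> real^2 \<Rightarrow> real^2 \<Rightarrow> real^2" where
  "frame_linear u v y = y$1 *\<^sub>R u + y$2 *\<^sub>R v"

lemma linear_frame_linear: "linear (frame_linear u v)"
  by (rule linearI) (simp_all add: frame_linear_def algebra_simps)

lemma det2_frame_linear: "det2 (frame_linear u v y) (frame_linear u v z) = det2 u v * det2 y z"
  by (simp add: frame_linear_def det2_def algebra_simps)

lemma inj_frame_linear:
  assumes "det2 u v \<noteq> 0"
  shows "inj (frame_linear u v)"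
proof (rule injI)
  fix y z assume "frame_linear u v y = frame_linear u v z"
  then have "det2 (frame_linear u v (y - z)) (frame_linear u v w) = 0" for w
    using linear_frame_linear by (simp add: linear_diff det2_def)
  then have "det2 (y - z) w = 0" for w using assms by (simp add: det2_frame_linear)
  from this[of "vector [1, 0]"] this[of "vector [0, 1]"] show "y = z"
    by (simp add: det2_def vec_eq_iff forall_2)
qed

lemma frame_linear_basis [simp]:
  "frame_linear u v 0 = 0" "frame_linear u v (vector [1, 0]) = u" "frame_linear u v (vector [0, 1]) = v"
  by (simp_all add: frame_linear_def)

lemma det2_frame_linear_diff:
  "det2 (frame_linear u v y - frame_linear u v x) (frame_linear u v z - frame_linear u v x)
     = det2 u v * det2 (y - x) (z - x)"
  using linear_frame_linear by (simp add: linear_diff[symmetric] det2_frame_linear)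

section \<open>Supporting lines\<close>

definition on_supporting_line :: "(real^2) set \<Rightarrow> real^2 \<Rightarrow> bool" where
  "on_supporting_line S x \<longleftrightarrow> (\<exists>w. w \<noteq> 0 \<and> (\<forall>y\<in>S. w \<bullet> y \<le> w \<bullet> x))"

lemma on_supporting_line_if_convex_position:
  fixes S :: "(real^2) set"
  assumes "convex_position S" "\<not> collinear S" "x \<in> S"
  shows "on_supporting_line S x"
proof -
  have "aff_dim S = DIM(real^2)"
    using assms(2) aff_dim_le_DIM[of S] by (simp add: collinear_aff_dim)
  then have "rel_interior (convex hull S) = interior (convex hull S)"
    by (intro rel_interior_interior) (simp only: affine_hull_convex_hull aff_dim_eq_full)
  moreover have "x \<notin> interior (convex hull S)"
    using assms(1,3) by (auto simp: convex_position_def frontier_def)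
  ultimately obtain a where "a \<noteq> 0" "\<And>y. y \<in> convex hull S \<Longrightarrow> a \<bullet> x \<le> a \<bullet> y"
    using supporting_hyperplane_rel_boundary[of "convex hull S" x] assms(3)
    by (metis convex_convex_hull hull_inc)
  then show ?thesis
    unfolding on_supporting_line_def by (intro exI[of _ "- a"]) (auto intro: hull_inc)
qed

text \<open>The point x lies on the line bc or on the side of it opposite to a.\<close>
definition beyond_edge :: "real^2 \<Rightarrow> real^2 \<Rightarrow> real^2 \<Rightarrow> real^2 \<Rightarrow> bool" where
  "beyond_edge a b c x \<longleftrightarrow> det2 (b - x) (c - x) * det2 (b - a) (c - a) \<le> 0"

lemma beyond_edge_if_on_supporting_line:
  assumes D: "det2 (b - a) (c - a) \<noteq> 0" and abc: "a \<in> S" "b \<in> S" "c \<in> S"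
    and "on_supporting_line S x"
  shows "beyond_edge a b c x \<or> beyond_edge b c a x \<or> beyond_edge c a b x"
proof (rule ccontr)
  define D where "D = det2 (b - a) (c - a)"
  define \<alpha> \<beta> \<gamma> where "\<alpha> = det2 (b - x) (c - x)" and "\<beta> = det2 (c - x) (a - x)"
    and "\<gamma> = det2 (a - x) (b - x)"
  assume "\<not> ?thesis"
  then have pos: "0 < \<alpha> * D" "0 < \<beta> * D" "0 < \<gamma> * D"
    by (auto simp: beyond_edge_def det2_cyclic \<alpha>_def \<beta>_def \<gamma>_def D_def)
  obtain w where "w \<noteq> 0" and w: "w \<bullet> a \<le> w \<bullet> x" "w \<bullet> b \<le> w \<bullet> x" "w \<bullet> c \<le> w \<bullet> x"
    using \<open>on_supporting_line S x\<close> abc by (auto simp: on_supporting_line_def)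
  have "D *\<^sub>R x = \<alpha> *\<^sub>R a + \<beta> *\<^sub>R b + \<gamma> *\<^sub>R c"
    unfolding D_def \<alpha>_def \<beta>_def \<gamma>_def by (rule det2_barycentric(2))
  then have "D * (w \<bullet> x) = \<alpha> * (w \<bullet> a) + \<beta> * (w \<bullet> b) + \<gamma> * (w \<bullet> c)"
    by (metis inner_add_right inner_scaleR_right)
  moreover have "D = \<alpha> + \<beta> + \<gamma>"
    unfolding D_def \<alpha>_def \<beta>_def \<gamma>_def by (rule det2_barycentric(1))
  ultimately have "\<alpha> * (w \<bullet> x - w \<bullet> a) + \<beta> * (w \<bullet> x - w \<bullet> b) + \<gamma> * (w \<bullet> x - w \<bullet> c) = 0"
    by (simp add: algebra_simps)
  then have "D * (\<alpha> * (w \<bullet> x - w \<bullet> a) + \<beta> * (w \<bullet> x - w \<bullet> b) + \<gamma> * (w \<bullet> x - w \<bullet> c)) = 0"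
    by simp
  then have "(\<alpha> * D) * (w \<bullet> x - w \<bullet> a) + (\<beta> * D) * (w \<bullet> x - w \<bullet> b)
      + (\<gamma> * D) * (w \<bullet> x - w \<bullet> c) = 0"
    by (simp only: distrib_left ac_simps)
  moreover have "0 \<le> (\<alpha> * D) * (w \<bullet> x - w \<bullet> a)" "0 \<le> (\<beta> * D) * (w \<bullet> x - w \<bullet> b)"
    "0 \<le> (\<gamma> * D) * (w \<bullet> x - w \<bullet> c)"
    using pos w by simp_all
  ultimately have "(\<alpha> * D) * (w \<bullet> x - w \<bullet> a) = 0" "(\<beta> * D) * (w \<bullet> x - w \<bullet> b) = 0"
    "(\<gamma> * D) * (w \<bullet> x - w \<bullet> c) = 0"
    by linarith+
  then have "w \<bullet> a = w \<bullet> x" "w \<bullet> b = w \<bullet> x" "w \<bullet> c = w \<bullet> x"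
    using pos by auto
  then have "w = 0"
    using eq_0_if_orthogonal_to_independent[OF D] by (simp add: inner_diff_right)
  then show False using \<open>w \<noteq> 0\<close> by contradiction
qed

lemma beyond_edge_frame_linear:
  assumes "det2 u v \<noteq> 0"
  shows "beyond_edge (a + frame_linear u v x) (a + frame_linear u v y) (a + frame_linear u v z) (a + frame_linear u v w)
     \<longleftrightarrow> beyond_edge x y z w"
proof -
  have pos: "0 < det2 u v * det2 u v" using assms not_real_square_gt_zero by blast
  have "(det2 u v * r) * (det2 u v * s) \<le> 0 \<longleftrightarrow> r * s \<le> 0" for r s
  proof -
    have eq: "(det2 u v * r) * (det2 u v * s) = (det2 u v * det2 u v) * (r * s)"
      by (simp add: algebra_simps)
    show ?thesis unfolding eq using mult_le_cancel_left_pos[OF pos, of "r * s" 0] by simp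
  qed
  then show ?thesis by (simp add: beyond_edge_def det2_frame_linear_diff)
qed

lemma on_supporting_line_frame_linear:
  assumes "det2 u v \<noteq> 0"
    and "on_supporting_line ((\<lambda>y. a + frame_linear u v y) ` T) (a + frame_linear u v x)"
  shows "on_supporting_line T x"
proof -
  obtain w where "w \<noteq> 0" and w: "\<forall>y\<in>T. w \<bullet> frame_linear u v y \<le> w \<bullet> frame_linear u v x"
    using assms(2) by (auto simp: on_supporting_line_def inner_add_right)
  define \<omega> :: "real^2" where "\<omega> = vector [w \<bullet> u, w \<bullet> v]"
  have \<omega>: "\<omega> \<bullet> y = w \<bullet> frame_linear u v y" for y
    by (simp add: \<omega>_def frame_linear_def inner_real2 algebra_simps)
  have "\<omega> \<noteq> 0"
  proof
    assume "\<omega> = 0"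
    then have "w \<bullet> u = 0" "w \<bullet> v = 0" by (simp_all add: \<omega>_def vec_eq_iff forall_2)
    then show False using eq_0_if_orthogonal_to_independent[OF assms(1)] \<open>w \<noteq> 0\<close> by blast
  qed
  then show ?thesis using w by (auto simp: on_supporting_line_def \<omega> intro!: exI[of _ \<omega>])
qed

section \<open>Five points normalized by a triangle\<close>

lemma csc_position_beyond_adjacent_edges:
  fixes p q :: "real^2"
  assumes p: "p$1 \<le> 1" "p$2 \<le> 1" "1 \<le> p$1 + p$2" and q: "q$1 \<le> 0" "q$2 \<le> 1" "0 \<le> q$1 + q$2"
    and "p \<noteq> vector [0, 1]" "q \<noteq> vector [0, 1]"
  shows "csc_position {0, vector [1, 0], vector [0, 1], p, q}"
proof -
  have "\<not> (p$1 = 0 \<and> p$2 = 1)" "\<not> (q$1 = 0 \<and> q$2 = 1)"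
    using assms(7,8) by (auto simp: vec_eq_iff forall_2)
  then have "0 < p$1" "q$1 + q$2 < 1" "0 \<le> q$2" using p q by auto
  show ?thesis
  proof (cases "p$2 = 1 \<and> q$2 = 1")
    case True
    show ?thesis
      by (rule csc_position_parallelogram[of "vector [0, 1]" "vector [1, 0]" 0 1 "-1" 1])
        (use True p q in \<open>auto simp: det2_def parallelogram_def inner_real2\<close>)
  next
    case False
    have "(1 - p$2) * q$1 \<le> 0" "0 \<le> p$1 * (1 - q$2)"
      using p q by (simp_all add: mult_nonneg_nonpos)
    have det: "(1 - p$2) * q$1 - p$1 * (1 - q$2) \<noteq> 0"
    proof
      assume "(1 - p$2) * q$1 - p$1 * (1 - q$2) = 0"
      then have "(1 - p$2) * q$1 = 0" "p$1 * (1 - q$2) = 0"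
        using \<open>(1 - p$2) * q$1 \<le> 0\<close> \<open>0 \<le> p$1 * (1 - q$2)\<close> by linarith+
      then show False using False \<open>0 < p$1\<close> \<open>q$1 + q$2 < 1\<close> by auto
    qed
    have up: "(1 - p$2) * p$1 + p$1 * p$2 = p$1" and vq: "(1 - q$2) * q$1 + q$1 * q$2 = q$1"
      by (simp_all add: algebra_simps)
    have "(1 - q$2) * p$1 \<le> 1 - q$2" "q$1 * p$2 \<le> 0" "q$1 * (1 - p$2) \<le> 0" "0 \<le> (1 - q$2) * p$1"
      using p q \<open>0 \<le> q$2\<close> \<open>0 < p$1\<close>
      by (simp_all add: mult_left_le mult_nonpos_nonneg mult_nonneg_nonpos)
    then have vp: "q$1 \<le> (1 - q$2) * p$1 + q$1 * p$2" "(1 - q$2) * p$1 + q$1 * p$2 \<le> 1 - q$2"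
      by (simp_all add: algebra_simps)
    have "p$1 * q$2 \<le> p$1" "(1 - p$2) * q$1 + p$1 * q$2 = (1 - p$2) * (q$1 + q$2) + q$2 * (p$1 + p$2 - 1)"
      using p q \<open>0 < p$1\<close> by (simp_all add: mult_left_le algebra_simps)
    moreover have "0 \<le> (1 - p$2) * (q$1 + q$2) + q$2 * (p$1 + p$2 - 1)"
      using p q \<open>0 \<le> q$2\<close> by simp
    ultimately have uq: "0 \<le> (1 - p$2) * q$1 + p$1 * q$2" "(1 - p$2) * q$1 + p$1 * q$2 \<le> p$1"
      using \<open>(1 - p$2) * q$1 \<le> 0\<close> by linarith+
    \<comment> \<open>sides on the lines through (0,1) and p, through (0,1) and q, and their parallels
      through 0 and through (1,0)\<close>
    show ?thesis
    proof (rule csc_position_parallelogram[of "vector [1 - p$2, p$1]" "vector [1 - q$2, q$1]" 0 "p$1" "q$1" "1 - q$2"])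
      show "{0, vector [1, 0], vector [0, 1], p, q}
        \<subseteq> parallelogram (vector [1 - p$2, p$1]) (vector [1 - q$2, q$1]) 0 (p$1) (q$1) (1 - q$2)"
        using p q up uq vp vq \<open>0 < p$1\<close> \<open>q$1 + q$2 < 1\<close>
        by (auto simp: parallelogram_def inner_real2)
    qed (use det up vq \<open>0 < p$1\<close> \<open>q$1 + q$2 < 1\<close> in \<open>auto simp: det2_def inner_real2 algebra_simps\<close>)
  qed
qed

text \<open>Since p2 * (q1, q2) = k * (1, 0) + q2 * (p1, p2) with k = q1 * p2 - q2 * p1 and k + q2 < p2,
  the point (q1, q2) lies in the triangle 0, (1, 0), (p1, p2), so no nonzero functional attains
  its maximum over 0, (1, 0), (0, 1), (p1, p2) there.\<close>
lemma supporting_functional_vanishes: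
  fixes p1 p2 q1 q2 \<omega>1 \<omega>2 :: real
  assumes "0 \<le> p1" "0 \<le> q1" "0 \<le> q2" "1 \<le> p1 + p2" "1 \<le> q1 + q2" "p2 \<le> 1" "q1 \<le> 1"
    and "\<not> (p1 = 0 \<and> p2 = 1)" "\<not> (q1 = 1 \<and> q2 = 0)"
    and k: "0 \<le> q1 * p2 - q2 * p1" "q1 * p2 - q2 * p1 < p2 - q2"
    and \<omega>: "0 \<le> \<omega>1 * q1 + \<omega>2 * q2" "\<omega>1 \<le> \<omega>1 * q1 + \<omega>2 * q2" "\<omega>2 \<le> \<omega>1 * q1 + \<omega>2 * q2"
      "\<omega>1 * p1 + \<omega>2 * p2 \<le> \<omega>1 * q1 + \<omega>2 * q2"
  shows "\<omega>1 = 0 \<and> \<omega>2 = 0"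
proof -
  define k where "k = q1 * p2 - q2 * p1"
  define E where "E = \<omega>1 * q1 + \<omega>2 * q2"
  define P where "P = \<omega>1 * p1 + \<omega>2 * p2"
  have split: "p2 * E = k * \<omega>1 + q2 * P" unfolding E_def P_def k_def by (simp add: algebra_simps)
  moreover have "k * \<omega>1 \<le> k * E" "q2 * P \<le> q2 * E"
    using assms by (simp_all add: E_def P_def k_def mult_left_mono)
  ultimately have "(p2 - k - q2) * E \<le> 0" by (simp add: algebra_simps)
  moreover have "0 < p2 - k - q2" using k by (simp add: k_def)
  ultimately have "E = 0" using \<omega>(1) by (simp add: E_def mult_le_0_iff)
  then have "\<omega>1 \<le> 0" "\<omega>2 \<le> 0" using \<omega> by (simp_all add: E_def)
  then have "\<omega>1 * q1 \<le> 0" "\<omega>2 * q2 \<le> 0" using assms by (simp_all add: mult_nonpos_nonneg)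
  then have "\<omega>2 * q2 = 0" using \<open>E = 0\<close> unfolding E_def by linarith
  moreover have "q2 \<noteq> 0" using assms by auto
  ultimately have "\<omega>2 = 0" by simp
  have "k * \<omega>1 \<le> 0" "q2 * P \<le> 0"
    using \<open>\<omega>1 \<le> 0\<close> k \<omega>(4) \<open>E = 0\<close> assms(3)
    by (simp_all add: k_def E_def P_def mult_nonneg_nonpos)
  moreover have "k * \<omega>1 + q2 * P = 0" using split \<open>E = 0\<close> by simp
  ultimately have "q2 * P = 0" by linarith
  then have "\<omega>1 * p1 = 0" using \<open>q2 \<noteq> 0\<close> \<open>\<omega>2 = 0\<close> by (simp add: P_def)
  moreover have "p1 \<noteq> 0" using assms by auto
  ultimately show ?thesis using \<open>\<omega>2 = 0\<close> by simp
qed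

lemma on_supporting_line_five_pointsE:
  assumes "on_supporting_line {0, vector [1, 0], vector [0, 1], p, q} x"
  obtains \<omega> :: "real^2" where "\<omega> \<noteq> 0" "0 \<le> \<omega> \<bullet> x" "\<omega>$1 \<le> \<omega> \<bullet> x" "\<omega>$2 \<le> \<omega> \<bullet> x"
    "\<omega> \<bullet> p \<le> \<omega> \<bullet> x" "\<omega> \<bullet> q \<le> \<omega> \<bullet> x"
  using assms unfolding on_supporting_line_def by (auto simp: inner_real2)

lemma csc_position_beyond_same_edge_oriented:
  fixes p q :: "real^2"
  assumes bounds: "p$1 \<le> 1" "p$2 \<le> 1" "q$1 \<le> 1" "q$2 \<le> 1" "1 \<le> p$1 + p$2" "1 \<le> q$1 + q$2"
    and distinct: "p \<notin> {vector [1, 0], vector [0, 1]}" "q \<notin> {vector [1, 0], vector [0, 1]}" "p \<noteq> q"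
    and supp: "on_supporting_line {0, vector [1, 0], vector [0, 1], p, q} p"
      "on_supporting_line {0, vector [1, 0], vector [0, 1], p, q} q"
    and orient: "0 \<le> det2 q p"
  shows "csc_position {0, vector [1, 0], vector [0, 1], p, q}"
proof -
  have ne: "\<not> (p$1 = 1 \<and> p$2 = 0)" "\<not> (p$1 = 0 \<and> p$2 = 1)"
    "\<not> (q$1 = 1 \<and> q$2 = 0)" "\<not> (q$1 = 0 \<and> q$2 = 1)" "\<not> (p$1 = q$1 \<and> p$2 = q$2)"
    using distinct by (auto simp: vec_eq_iff forall_2)
  have nonneg: "0 \<le> p$1" "0 \<le> p$2" "0 \<le> q$1" "0 \<le> q$2" using bounds by linarith+
  define k where "k = det2 q p"
  have k: "k = q$1 * p$2 - q$2 * p$1" by (simp add: k_def det2_def)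
  \<comment> \<open>(1,0) and (0,1) are on the side of the line through p and q containing 0, for otherwise
    q resp. p would lie in the triangle spanned by 0 and the other points\<close>
  have e1: "p$2 - q$2 \<le> k"
  proof (rule ccontr)
    assume contra: "\<not> p$2 - q$2 \<le> k"
    obtain \<omega> :: "real^2" where "\<omega> \<noteq> 0" "0 \<le> \<omega> \<bullet> q" "\<omega>$1 \<le> \<omega> \<bullet> q" "\<omega>$2 \<le> \<omega> \<bullet> q" "\<omega> \<bullet> p \<le> \<omega> \<bullet> q"
      using on_supporting_line_five_pointsE[OF supp(2)] by blast
    then show False
      using supporting_functional_vanishes[of "p$1" "q$1" "q$2" "p$2" "\<omega>$1" "\<omega>$2"]
        contra orient nonneg bounds ne
      by (auto simp: k_def det2_def inner_real2 vec_eq_iff forall_2 algebra_simps)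
  qed
  have e2: "q$1 - p$1 \<le> k"
  proof (rule ccontr)
    assume contra: "\<not> q$1 - p$1 \<le> k"
    obtain \<omega> :: "real^2" where "\<omega> \<noteq> 0" "0 \<le> \<omega> \<bullet> p" "\<omega>$1 \<le> \<omega> \<bullet> p" "\<omega>$2 \<le> \<omega> \<bullet> p" "\<omega> \<bullet> q \<le> \<omega> \<bullet> p"
      using on_supporting_line_five_pointsE[OF supp(1)] by blast
    then show False
      using supporting_functional_vanishes[of "q$2" "p$2" "p$1" "q$1" "\<omega>$2" "\<omega>$1"]
        contra orient nonneg bounds ne
      by (auto simp: k_def det2_def inner_real2 vec_eq_iff forall_2 algebra_simps)
  qed
  define m where "m = min 0 (min (p$2 - q$2) (q$1 - p$1))"
  have "m < k"
  proof (rule ccontr)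
    assume "\<not> m < k"
    then have "p$2 = q$2" "q$1 = p$1" using e1 e2 orient unfolding m_def k_def by linarith+
    then show False using ne(5) by simp
  qed
  define u :: "real^2" where "u = vector [p$2 - q$2, q$1 - p$1]"
  have u: "u \<bullet> 0 = 0" "u \<bullet> vector [1, 0] = p$2 - q$2" "u \<bullet> vector [0, 1] = q$1 - p$1"
    "u \<bullet> p = k" "u \<bullet> q = k"
    by (simp_all add: u_def inner_real2 k algebra_simps)
  have range: "m \<le> u \<bullet> x \<and> u \<bullet> x \<le> k" if "x \<in> {0, vector [1, 0], vector [0, 1], p, q}" for x
    using that u e1 e2 orient by (auto simp: m_def k_def)
  show ?thesis
  proof (cases "p$2 = q$2")
    case False
    show ?thesis
    proof (rule csc_position_parallelogram[of u "vector [0, 1]" m k 0 1])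
      show "det2 u (vector [0, 1]) \<noteq> 0" using False by (simp add: u_def det2_def)
      have "0 \<le> vector [0, 1] \<bullet> x \<and> vector [0, 1] \<bullet> x \<le> 1" if "x \<in> {0, vector [1, 0], vector [0, 1], p, q}" for x
        using that nonneg bounds by (auto simp: inner_real2)
      then show "{0, vector [1, 0], vector [0, 1], p, q} \<subseteq> parallelogram u (vector [0, 1]) m k 0 1"
        using range unfolding parallelogram_def by blast
    qed (use \<open>m < k\<close> u in \<open>auto simp: inner_real2\<close>)
  next
    case True
    then have "q$1 \<noteq> p$1" using ne(5) by auto
    show ?thesis
    proof (rule csc_position_parallelogram[of u "vector [1, 0]" m k 0 1])
      show "det2 u (vector [1, 0]) \<noteq> 0" using \<open>q$1 \<noteq> p$1\<close> by (simp add: u_def det2_def)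
      have "0 \<le> vector [1, 0] \<bullet> x \<and> vector [1, 0] \<bullet> x \<le> 1" if "x \<in> {0, vector [1, 0], vector [0, 1], p, q}" for x
        using that nonneg bounds by (auto simp: inner_real2)
      then show "{0, vector [1, 0], vector [0, 1], p, q} \<subseteq> parallelogram u (vector [1, 0]) m k 0 1"
        using range unfolding parallelogram_def by blast
    qed (use \<open>m < k\<close> u in \<open>auto simp: inner_real2\<close>)
  qed
qed

lemma csc_position_beyond_same_edge:
  fixes p q :: "real^2"
  assumes "p$1 \<le> 1" "p$2 \<le> 1" "q$1 \<le> 1" "q$2 \<le> 1" "1 \<le> p$1 + p$2" "1 \<le> q$1 + q$2"
    and "p \<notin> {vector [1, 0], vector [0, 1]}" "q \<notin> {vector [1, 0], vector [0, 1]}" "p \<noteq> q"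
    and "on_supporting_line {0, vector [1, 0], vector [0, 1], p, q} p"
      "on_supporting_line {0, vector [1, 0], vector [0, 1], p, q} q"
  shows "csc_position {0, vector [1, 0], vector [0, 1], p, q}"
proof (cases "0 \<le> det2 q p")
  case True
  with assms show ?thesis by (rule csc_position_beyond_same_edge_oriented)
next
  case False
  then have "0 \<le> det2 p q" by (simp add: det2_def algebra_simps)
  moreover have swap: "{0, vector [1, 0], vector [0, 1], q, p} = {0, vector [1, 0], vector [0, 1], p, q}"
    by auto
  ultimately show ?thesis
    using assms csc_position_beyond_same_edge_oriented[of q p] by (simp only: swap) blast
qed

lemma csc_position_normalized:
  fixes p q :: "real^2"
  defines "T \<equiv> {0, vector [1, 0], vector [0, 1], p, q}"
  assumes "card T = 5"
    and area: "\<And>x y z. x \<in> T \<Longrightarrow> y \<in> T \<Longrightarrow> z \<in> T \<Longrightarrow> \<bar>det2 (y - x) (z - x)\<bar> \<le> 1"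
    and supp: "\<And>x. x \<in> T \<Longrightarrow> on_supporting_line T x"
    and "1 \<le> p$1 + p$2" "1 \<le> q$1 + q$2 \<or> q$1 \<le> 0"
  shows "csc_position T"
proof -
  have "distinct [0, vector [1, 0], vector [0, 1], p, q]"
    using \<open>card T = 5\<close> by (intro card_distinct) (simp add: T_def)
  then have distinct: "p \<notin> {vector [1, 0], vector [0, 1]}" "q \<notin> {vector [1, 0], vector [0, 1]}" "p \<noteq> q"
    by auto
  have bounds: "\<bar>x$1\<bar> \<le> 1 \<and> \<bar>x$2\<bar> \<le> 1 \<and> \<bar>1 - x$1 - x$2\<bar> \<le> 1" if "x \<in> T" for x
    using area[OF _ that, of 0 "vector [0, 1]"] area[of 0 "vector [1, 0]" x]
      area[OF that, of "vector [1, 0]" "vector [0, 1]"] that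
    by (simp add: T_def det2_def algebra_simps)
  have p: "p$1 \<le> 1" "p$2 \<le> 1" and q: "q$1 \<le> 1" "q$2 \<le> 1" "0 \<le> q$1 + q$2"
    using bounds[of p] bounds[of q] by (auto simp: T_def abs_le_iff)
  show ?thesis
  proof (cases "q$1 \<le> 0")
    case True
    then show ?thesis
      unfolding T_def using p q distinct \<open>1 \<le> p$1 + p$2\<close>
      by (intro csc_position_beyond_adjacent_edges) auto
  next
    case False
    then show ?thesis
      unfolding T_def using p q distinct assms(5,6) supp[of p] supp[of q]
      by (intro csc_position_beyond_same_edge) (auto simp: T_def)
  qed
qed

section \<open>Triangles of maximal area\<close>

lemma csc_position_max_area_frame:
  fixes S :: "(real^2) set"
  assumes S: "S = {a, b, c, d, e}" "card S = 5"
    and D: "det2 (b - a) (c - a) \<noteq> 0"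
    and area: "\<And>x y z. x \<in> S \<Longrightarrow> y \<in> S \<Longrightarrow> z \<in> S \<Longrightarrow> \<bar>det2 (y - x) (z - x)\<bar> \<le> \<bar>det2 (b - a) (c - a)\<bar>"
    and supp: "\<And>x. x \<in> S \<Longrightarrow> on_supporting_line S x"
    and beyond: "beyond_edge a b c d" "beyond_edge a b c e \<or> beyond_edge b c a e"
  shows "csc_position S"
proof -
  define L where "L = frame_linear (b - a) (c - a)"
  have L: "linear L" "inj L"
    using D by (simp_all add: L_def linear_frame_linear inj_frame_linear)
  then have "surj L" by (rule linear_inj_imp_surj)
  then obtain p q where "L p = d - a" "L q = e - a" by (metis surj_def)
  have pts: "a + L 0 = a" "a + L (vector [1, 0]) = b" "a + L (vector [0, 1]) = c" "a + L p = d" "a + L q = e"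
    by (simp_all add: \<open>L p = d - a\<close> \<open>L q = e - a\<close>) (simp_all add: L_def)
  define T where "T = {0, vector [1, 0], vector [0, 1], p, q}"
  have ST: "S = (\<lambda>y. a + L y) ` T"
    by (simp add: T_def S pts)
  have "inj_on (\<lambda>y. a + L y) T" by (rule inj_onI) (use L(2) in \<open>simp add: inj_eq\<close>)
  then have "card T = 5" using S(2) by (simp add: ST card_image)
  have "\<bar>det2 (y - x) (z - x)\<bar> \<le> 1" if "x \<in> T" "y \<in> T" "z \<in> T" for x y z
    using area[of "a + L x" "a + L y" "a + L z"] that D
    by (simp add: ST L_def det2_frame_linear_diff abs_mult)
  moreover have "on_supporting_line T x" if "x \<in> T" for x
  proof -
    have "on_supporting_line ((\<lambda>y. a + L y) ` T) (a + L x)"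
      using supp[of "a + L x"] that unfolding ST by blast
    then show ?thesis unfolding L_def by (rule on_supporting_line_frame_linear[OF D])
  qed
  moreover have "1 \<le> p$1 + p$2" "1 \<le> q$1 + q$2 \<or> q$1 \<le> 0"
  proof -
    have "beyond_edge 0 (vector [1, 0]) (vector [0, 1]) p" "beyond_edge 0 (vector [1, 0]) (vector [0, 1]) q
      \<or> beyond_edge (vector [1, 0]) (vector [0, 1]) 0 q"
      using beyond
        beyond_edge_frame_linear[OF D, of a 0 "vector [1, 0]" "vector [0, 1]" p, folded L_def, unfolded pts]
        beyond_edge_frame_linear[OF D, of a 0 "vector [1, 0]" "vector [0, 1]" q, folded L_def, unfolded pts]
        beyond_edge_frame_linear[OF D, of a "vector [1, 0]" "vector [0, 1]" 0 q, folded L_def, unfolded pts]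
      by simp_all
    then show "1 \<le> p$1 + p$2" "1 \<le> q$1 + q$2 \<or> q$1 \<le> 0"
      by (auto simp: beyond_edge_def det2_def algebra_simps)
  qed
  ultimately have "csc_position T"
    using \<open>card T = 5\<close> unfolding T_def by (intro csc_position_normalized) auto
  then have "csc_position ((+) a ` (L ` T))"
    by (intro csc_position_translation csc_position_linear_image L)
  then show ?thesis by (simp add: ST image_image)
qed

lemma csc_position_max_area_triangle:
  fixes S :: "(real^2) set"
  assumes S: "S = {a, b, c, d, e}" "card S = 5"
    and D: "det2 (b - a) (c - a) \<noteq> 0"
    and area: "\<And>x y z. x \<in> S \<Longrightarrow> y \<in> S \<Longrightarrow> z \<in> S \<Longrightarrow> \<bar>det2 (y - x) (z - x)\<bar> \<le> \<bar>det2 (b - a) (c - a)\<bar>"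
    and supp: "\<And>x. x \<in> S \<Longrightarrow> on_supporting_line S x"
  shows "csc_position S"
proof -
  have frame: "csc_position S"
    if "S = {a', b', c', d', e'}" "det2 (b' - a') (c' - a') = det2 (b - a) (c - a)"
      "beyond_edge a' b' c' d'" "beyond_edge a' b' c' e' \<or> beyond_edge b' c' a' e'" for a' b' c' d' e'
    using csc_position_max_area_frame[OF that(1) S(2)] that(2-4) D area supp by simp
  have rot: "det2 (c - b) (a - b) = det2 (b - a) (c - a)" "det2 (a - c) (b - c) = det2 (b - a) (c - a)"
    by (simp_all add: det2_def algebra_simps)
  have perm: "S = {b, c, a, d, e}" "S = {c, a, b, d, e}" "S = {a, b, c, e, d}" "S = {b, c, a, e, d}"
    "S = {c, a, b, e, d}"
    using S(1) by auto
  have "beyond_edge a b c x \<or> beyond_edge b c a x \<or> beyond_edge c a b x" if "x \<in> S" for x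
    using beyond_edge_if_on_supporting_line[OF D _ _ _ supp[OF that]] S(1) by simp
  then have "beyond_edge a b c d \<or> beyond_edge b c a d \<or> beyond_edge c a b d"
    "beyond_edge a b c e \<or> beyond_edge b c a e \<or> beyond_edge c a b e"
    using S(1) by simp_all
  \<comment> \<open>cyclic relabelling of the triangle and swapping d and e cover all nine cases\<close>
  then show ?thesis
    using frame[OF S(1) refl] frame[OF perm(1) rot(1)] frame[OF perm(2) rot(2)]
      frame[OF perm(3) refl] frame[OF perm(4) rot(1)] frame[OF perm(5) rot(2)]
    by blast
qed

lemma ex_max_area_triangle:
  fixes S :: "(real^2) set"
  assumes "finite S" "S \<noteq> {}"
  obtains a b c where "a \<in> S" "b \<in> S" "c \<in> S"
    "\<And>x y z. x \<in> S \<Longrightarrow> y \<in> S \<Longrightarrow> z \<in> S \<Longrightarrow> \<bar>det2 (y - x) (z - x)\<bar> \<le> \<bar>det2 (b - a) (c - a)\<bar>"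
proof -
  define area where "area = (\<lambda>(x, y, z). \<bar>det2 (y - x) (z - x)\<bar>)"
  have fin: "finite (area ` (S \<times> S \<times> S))" using assms(1) by simp
  have "Max (area ` (S \<times> S \<times> S)) \<in> area ` (S \<times> S \<times> S)"
    using fin assms(2) by (intro Max_in) auto
  then obtain a b c where "a \<in> S" "b \<in> S" "c \<in> S" "area (a, b, c) = Max (area ` (S \<times> S \<times> S))"
    by auto
  moreover have "area (x, y, z) \<le> Max (area ` (S \<times> S \<times> S))" if "x \<in> S" "y \<in> S" "z \<in> S" for x y z
    using fin that by (intro Max_ge) auto
  ultimately show ?thesis using that by (auto simp: area_def)
qed

theorem mainTheorem3:
  fixes S :: "(real^2) set"
  assumes "finite S" and "card S = 5" and "convex_position S"
  shows "csc_position S"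
proof (cases "collinear S")
  case True
  then show ?thesis using assms(1) by (rule csc_position_collinear[rotated])
next
  case False
  have "S \<noteq> {}" using assms(2) by auto
  then obtain a b c where abc: "a \<in> S" "b \<in> S" "c \<in> S" and area:
    "\<And>x y z. x \<in> S \<Longrightarrow> y \<in> S \<Longrightarrow> z \<in> S \<Longrightarrow> \<bar>det2 (y - x) (z - x)\<bar> \<le> \<bar>det2 (b - a) (c - a)\<bar>"
    using ex_max_area_triangle[OF assms(1)] by blast
  obtain x y z where "x \<in> S" "y \<in> S" "z \<in> S" "det2 (y - x) (z - x) \<noteq> 0"
    using False by (auto simp: collinear_iff_det2)
  then have D: "det2 (b - a) (c - a) \<noteq> 0" using area[of x y z] by auto
  then have "a \<noteq> b" "a \<noteq> c" "b \<noteq> c" by (auto simp: det2_def)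
  then have "card {a, b, c} = 3" by simp
  then have "card (S - {a, b, c}) = 2" using assms(1,2) abc by (simp add: card_Diff_subset)
  then obtain d e where "S - {a, b, c} = {d, e}" by (auto simp: card_2_iff)
  then have "S = {a, b, c, d, e}" using abc by auto
  then show ?thesis
    using assms(2) D area on_supporting_line_if_convex_position[OF assms(3) False]
    by (rule csc_position_max_area_triangle)
qed

end
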